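(* Let $(I,\preccurlyeq)$ be a directed set, let $S(\Lambda^{\succcurlyeq})$ be a contravariant direct spectrum over $(I,\preccurlyeq)$ with sets $\lambda_0(i)$, transports $\lambda^{\succcurlyeq}_{ji}$ and Bishop spaces $\mathcal F_i=(\lambda_0(i),F_i)$, let $\mathcal F=(X,F)$ be a Bishop space, and let $S(\Lambda^{\succcurlyeq})\to\mathcal F$ be the direct spectrum over $(I,\preccurlyeq)$ with sets $\mathrm{Mor}(\mathcal F_i,\mathcal F)$, transports $(\lambda^{\succcurlyeq}_{ji})^+:\mathrm{Mor}(\mathcal F_i,\mathcal F)\to\mathrm{Mor}(\mathcal F_j,\mathcal F)$, $\phi\mapsto\phi\circ\lambda^{\succcurlyeq}_{ji}$ (for $i\preccurlyeq j$), and Bishop spaces $\mathcal F_i\to\mathcal F$. Then there is a function $\widehat{\ }:\underset{\to}{\mathrm{Lim}}\,[\mathrm{Mor}(\mathcal F_i,\mathcal F)]\to\mathrm{Mor}(\underset{\leftarrow}{\mathrm{Lim}}\,\mathcal F_i,\mathcal F)$ such that: (i) $\widehat{\ }\in\mathrm{Mor}(\underset{\to}{\mathrm{Lim}}\,(\mathcal F_i\to\mathcal F),(\underset{\leftarrow}{\mathrm{Lim}}\,\mathcal F_i)\to\mathcal F)$; (ii) if for every $j\in I$ and every $y\in\lambda_0(j)$ there is $\Theta_y\in\prod^{\succcurlyeq}_{i\in I}\lambda_0(i)$ with $\Theta_y(j)=y$ in $\lambda_0(j)$, then $\widehat{\ }$ is an embedding.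
   Context: Work in Bishop-style constructive mathematics. Each set has its own equality; functions respect it; an embedding $f$ satisfies $f(x)=f(x')\Rightarrow x=x'$. A directed set: a set with a reflexive transitive relation respecting equality, any two elements having a common upper bound. A direct family over $(I,\preccurlyeq)$: sets $\mu_0(i)$ and functions $\mu^{\preccurlyeq}_{ij}:\mu_0(i)\to\mu_0(j)$ for $i\preccurlyeq j$ with $\mu^{\preccurlyeq}_{ii}=\mathrm{id}$, $\mu^{\preccurlyeq}_{ik}=\mu^{\preccurlyeq}_{jk}\circ\mu^{\preccurlyeq}_{ij}$. A contravariant direct family: sets $\lambda_0(i)$ and functions $\lambda^{\succcurlyeq}_{ji}:\lambda_0(j)\to\lambda_0(i)$ for $i\preccurlyeq j$ with $\lambda^{\succcurlyeq}_{ii}=\mathrm{id}$, $\lambda^{\succcurlyeq}_{ki}=\lambda^{\succcurlyeq}_{ji}\circ\lambda^{\succcurlyeq}_{kj}$. Bishop spaces: a Bishop topology on $X$ is a set $F$ of functions $X\to\mathbb R$ containing constants, closed under addition, composition with functions $\mathbb R\to\mathbb R$ uniformly continuous on every $[-n,n]$, and uniform limits; $\bigvee F_0$ = least Bishop topology containing $F_0$; Bishop morphism $(X,F)\to(Y,G)$: function $h$ with $g\circ h\in F$ for all $g\in G$. Exponential: $\mathcal F\to\mathcal G=(\mathrm{Mor}(\mathcal F,\mathcal G),\bigvee\{\phi_{x,g}\})$, $\phi_{x,g}(h)=g(h(x))$. A (contravariant) direct spectrum: a (contravariant) direct family with Bishop topologies making all transports Bishop morphisms. Direct limit of a direct spectrum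 (sets $\mu_0(i)$, transports $\mu^{\preccurlyeq}_{ij}$, topologies $G_i$): pairs $(i,x)$ with $(i,x)=(j,y)$ iff there is $k\succcurlyeq i,j$ with $\mu^{\preccurlyeq}_{ik}(x)=\mu^{\preccurlyeq}_{jk}(y)$; $\underset{\to}{\mathrm{Lim}}\,\mu_0(i)$ = classes $\mathrm{eql}_0(i,x)$; $\prod^{\succcurlyeq}G_i$ = dependent $\Theta$ with $\Theta_i\in G_i$, $\Theta_i=\Theta_j\circ\mu^{\preccurlyeq}_{ij}$; $\underset{\to}{\mathrm{Lim}}\,\mathcal G_i=(\underset{\to}{\mathrm{Lim}}\,\mu_0(i),\bigvee\{\mathrm{eql}_0f_\Theta\})$ with $\mathrm{eql}_0f_\Theta(\mathrm{eql}_0(i,x))=\Theta_i(x)$. Inverse limit of the contravariant spectrum: $\prod^{\succcurlyeq}\lambda_0(i)$ = dependent $\Phi$ with $\Phi_i\in\lambda_0(i)$, $\Phi_i=\lambda^{\succcurlyeq}_{ji}(\Phi_j)$ for $i\preccurlyeq j$; $\pi_i(\Phi)=\Phi_i$; $\underset{\leftarrow}{\mathrm{Lim}}\,\mathcal F_i=(\prod^{\succcurlyeq}\lambda_0(i),\bigvee\{f\circ\pi_i:i\in I,f\in F_i\})$. *)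

theory Defs
  imports Complex_Main "HOL-Library.FuncSet"
begin

text \<open>Sets with their own equality are rendered as HOL sets with HOL equality;
  functions on a set A are represented extensionally (value undefined off A),
  so that equality of functions is pointwise equality on A.\<close>

definition Bica :: "(real \<Rightarrow> real) set" where
  "Bica = {\<phi>. \<forall>n::nat. uniformly_continuous_on {- real n .. real n} \<phi>}"

definition bishop_topology :: "'a set \<Rightarrow> ('a \<Rightarrow> real) set \<Rightarrow> bool" where
  "bishop_topology A F \<longleftrightarrow>
     F \<subseteq> extensional A \<and>
     (\<forall>c. restrict (\<lambda>_. c) A \<in> F) \<and>
     (\<forall>f\<in>F. \<forall>g\<in>F. restrict (\<lambda>x. f x + g x) A \<in> F) \<and>
     (\<forall>f\<in>F. \<forall>\<phi>\<in>Bica. restrict (\<phi> \<circ> f) A \<in> F) \<and>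
     (\<forall>f\<in>extensional A. (\<forall>\<epsilon>>0. \<exists>g\<in>F. \<forall>x\<in>A. \<bar>f x - g x\<bar> \<le> \<epsilon>) \<longrightarrow> f \<in> F)"

definition bishop_gen :: "'a set \<Rightarrow> ('a \<Rightarrow> real) set \<Rightarrow> ('a \<Rightarrow> real) set" where
  "bishop_gen A F0 = \<Inter>{F. bishop_topology A F \<and> F0 \<subseteq> F}"

definition is_bishop_mor ::
  "'a set \<Rightarrow> ('a \<Rightarrow> real) set \<Rightarrow> 'b set \<Rightarrow> ('b \<Rightarrow> real) set \<Rightarrow> ('a \<Rightarrow> 'b) \<Rightarrow> bool" where
  "is_bishop_mor A F B G h \<longleftrightarrow> (\<forall>x\<in>A. h x \<in> B) \<and> (\<forall>g\<in>G. restrict (g \<circ> h) A \<in> F)"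

definition Mor ::
  "'a set \<Rightarrow> ('a \<Rightarrow> real) set \<Rightarrow> 'b set \<Rightarrow> ('b \<Rightarrow> real) set \<Rightarrow> ('a \<Rightarrow> 'b) set" where
  "Mor A F B G = {h \<in> extensional A. is_bishop_mor A F B G h}"

definition exp_top ::
  "'a set \<Rightarrow> ('a \<Rightarrow> real) set \<Rightarrow> 'b set \<Rightarrow> ('b \<Rightarrow> real) set \<Rightarrow> (('a \<Rightarrow> 'b) \<Rightarrow> real) set" where
  "exp_top A F B G = bishop_gen (Mor A F B G)
      {restrict (\<lambda>h. g (h x)) (Mor A F B G) | x g. x \<in> A \<and> g \<in> G}"

definition directed_set :: "'i set \<Rightarrow> ('i \<Rightarrow> 'i \<Rightarrow> bool) \<Rightarrow> bool" where
  "directed_set I le \<longleftrightarrow>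
     (\<forall>i\<in>I. le i i) \<and>
     (\<forall>i\<in>I. \<forall>j\<in>I. \<forall>k\<in>I. le i j \<longrightarrow> le j k \<longrightarrow> le i k) \<and>
     (\<forall>i\<in>I. \<forall>j\<in>I. \<exists>k\<in>I. le i k \<and> le j k)"

definition contra_direct_spectrum ::
  "'i set \<Rightarrow> ('i \<Rightarrow> 'i \<Rightarrow> bool) \<Rightarrow> ('i \<Rightarrow> 'a set) \<Rightarrow> ('i \<Rightarrow> 'i \<Rightarrow> 'a \<Rightarrow> 'a)
     \<Rightarrow> ('i \<Rightarrow> ('a \<Rightarrow> real) set) \<Rightarrow> bool" where
  "contra_direct_spectrum I le lam0 lam F \<longleftrightarrow>
     (\<forall>i\<in>I. \<forall>j\<in>I. le i j \<longrightarrow> (\<forall>x\<in>lam0 j. lam j i x \<in> lam0 i)) \<and>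
     (\<forall>i\<in>I. \<forall>x\<in>lam0 i. lam i i x = x) \<and>
     (\<forall>i\<in>I. \<forall>j\<in>I. \<forall>k\<in>I. le i j \<longrightarrow> le j k \<longrightarrow>
        (\<forall>x\<in>lam0 k. lam k i x = lam j i (lam k j x))) \<and>
     (\<forall>i\<in>I. bishop_topology (lam0 i) (F i)) \<and>
     (\<forall>i\<in>I. \<forall>j\<in>I. le i j \<longrightarrow> is_bishop_mor (lam0 j) (F j) (lam0 i) (F i) (lam j i))"

definition dl_rel :: "'i set \<Rightarrow> ('i \<Rightarrow> 'i \<Rightarrow> bool) \<Rightarrow> ('i \<Rightarrow> 'i \<Rightarrow> 'c \<Rightarrow> 'c)
     \<Rightarrow> ('i \<times> 'c) \<Rightarrow> ('i \<times> 'c) \<Rightarrow> bool" where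
  "dl_rel I le mu p q \<longleftrightarrow>
     (\<exists>k\<in>I. le (fst p) k \<and> le (fst q) k \<and> mu (fst p) k (snd p) = mu (fst q) k (snd q))"

definition eql0 :: "'i set \<Rightarrow> ('i \<Rightarrow> 'i \<Rightarrow> bool) \<Rightarrow> ('i \<Rightarrow> 'c set) \<Rightarrow> ('i \<Rightarrow> 'i \<Rightarrow> 'c \<Rightarrow> 'c)
     \<Rightarrow> 'i \<Rightarrow> 'c \<Rightarrow> ('i \<times> 'c) set" where
  "eql0 I le mu0 mu i x = {q \<in> Sigma I mu0. dl_rel I le mu (i, x) q}"

definition dir_lim :: "'i set \<Rightarrow> ('i \<Rightarrow> 'i \<Rightarrow> bool) \<Rightarrow> ('i \<Rightarrow> 'c set) \<Rightarrow> ('i \<Rightarrow> 'i \<Rightarrow> 'c \<Rightarrow> 'c)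
     \<Rightarrow> ('i \<times> 'c) set set" where
  "dir_lim I le mu0 mu = {eql0 I le mu0 mu i x | i x. i \<in> I \<and> x \<in> mu0 i}"

definition dl_prod_top :: "'i set \<Rightarrow> ('i \<Rightarrow> 'i \<Rightarrow> bool) \<Rightarrow> ('i \<Rightarrow> 'c set) \<Rightarrow> ('i \<Rightarrow> 'i \<Rightarrow> 'c \<Rightarrow> 'c)
     \<Rightarrow> ('i \<Rightarrow> ('c \<Rightarrow> real) set) \<Rightarrow> ('i \<Rightarrow> 'c \<Rightarrow> real) set" where
  "dl_prod_top I le mu0 mu G =
     {\<Theta> \<in> Pi\<^sub>E I G. \<forall>i\<in>I. \<forall>j\<in>I. le i j \<longrightarrow> (\<forall>x\<in>mu0 i. \<Theta> i x = \<Theta> j (mu i j x))}"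

definition eql0_f :: "'i set \<Rightarrow> ('i \<Rightarrow> 'i \<Rightarrow> bool) \<Rightarrow> ('i \<Rightarrow> 'c set) \<Rightarrow> ('i \<Rightarrow> 'i \<Rightarrow> 'c \<Rightarrow> 'c)
     \<Rightarrow> ('i \<Rightarrow> 'c \<Rightarrow> real) \<Rightarrow> ('i \<times> 'c) set \<Rightarrow> real" where
  "eql0_f I le mu0 mu \<Theta> =
     restrict (\<lambda>C. let p = (SOME p. p \<in> C) in \<Theta> (fst p) (snd p)) (dir_lim I le mu0 mu)"

definition dir_lim_top :: "'i set \<Rightarrow> ('i \<Rightarrow> 'i \<Rightarrow> bool) \<Rightarrow> ('i \<Rightarrow> 'c set) \<Rightarrow> ('i \<Rightarrow> 'i \<Rightarrow> 'c \<Rightarrow> 'c)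
     \<Rightarrow> ('i \<Rightarrow> ('c \<Rightarrow> real) set) \<Rightarrow> (('i \<times> 'c) set \<Rightarrow> real) set" where
  "dir_lim_top I le mu0 mu G = bishop_gen (dir_lim I le mu0 mu)
      (eql0_f I le mu0 mu ` dl_prod_top I le mu0 mu G)"

definition inv_lim :: "'i set \<Rightarrow> ('i \<Rightarrow> 'i \<Rightarrow> bool) \<Rightarrow> ('i \<Rightarrow> 'a set) \<Rightarrow> ('i \<Rightarrow> 'i \<Rightarrow> 'a \<Rightarrow> 'a)
     \<Rightarrow> ('i \<Rightarrow> 'a) set" where
  "inv_lim I le lam0 lam =
     {\<Phi> \<in> Pi\<^sub>E I lam0. \<forall>i\<in>I. \<forall>j\<in>I. le i j \<longrightarrow> \<Phi> i = lam j i (\<Phi> j)}"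

definition inv_lim_top :: "'i set \<Rightarrow> ('i \<Rightarrow> 'i \<Rightarrow> bool) \<Rightarrow> ('i \<Rightarrow> 'a set) \<Rightarrow> ('i \<Rightarrow> 'i \<Rightarrow> 'a \<Rightarrow> 'a)
     \<Rightarrow> ('i \<Rightarrow> ('a \<Rightarrow> real) set) \<Rightarrow> (('i \<Rightarrow> 'a) \<Rightarrow> real) set" where
  "inv_lim_top I le lam0 lam F = bishop_gen (inv_lim I le lam0 lam)
      {restrict (\<lambda>\<Phi>. f (\<Phi> i)) (inv_lim I le lam0 lam) | i f. i \<in> I \<and> f \<in> F i}"

definition mor_sp0 :: "('i \<Rightarrow> 'a set) \<Rightarrow> ('i \<Rightarrow> ('a \<Rightarrow> real) set) \<Rightarrow> 'b set \<Rightarrow> ('b \<Rightarrow> real) set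
     \<Rightarrow> 'i \<Rightarrow> ('a \<Rightarrow> 'b) set" where
  "mor_sp0 lam0 F X FX i = Mor (lam0 i) (F i) X FX"

definition mor_sp :: "('i \<Rightarrow> 'a set) \<Rightarrow> ('i \<Rightarrow> 'i \<Rightarrow> 'a \<Rightarrow> 'a)
     \<Rightarrow> 'i \<Rightarrow> 'i \<Rightarrow> ('a \<Rightarrow> 'b) \<Rightarrow> ('a \<Rightarrow> 'b)" where
  "mor_sp lam0 lam i j \<phi> = restrict (\<phi> \<circ> lam j i) (lam0 j)"

definition mor_sp_top :: "('i \<Rightarrow> 'a set) \<Rightarrow> ('i \<Rightarrow> ('a \<Rightarrow> real) set) \<Rightarrow> 'b set \<Rightarrow> ('b \<Rightarrow> real) set
     \<Rightarrow> 'i \<Rightarrow> (('a \<Rightarrow> 'b) \<Rightarrow> real) set" where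
  "mor_sp_top lam0 F X FX i = exp_top (lam0 i) (F i) X FX"

end

theory Submission
  imports Defs
begin

(* The map sends the class of \<phi> \<in> Mor(F_i, F) to \<phi> \<circ> \<pi>_i. This does not depend on the
   representative: a thread \<Phi> of the inverse limit satisfies \<Phi>_i = \<lambda>_ki(\<Phi>_k), so the family
   (i, \<phi>) \<mapsto> \<phi>(\<Phi>_i) is compatible with the transports (\<lambda>_ij)^+ and hence constant on classes.
   Whether a map into an exponential space is a Bishop morphism can be tested on the generators
   \<phi>_{\<Phi>,f} of the exponential topology, and \<phi>_{\<Phi>,f} \<circ> hat is the generator eql0 f_\<Theta> of the
   direct-limit topology for \<Theta>_i(\<phi>) = f(\<phi>(\<Phi>_i)). If every projection \<pi>_k is onto, then
   \<phi> \<circ> \<pi>_i = \<psi> \<circ> \<pi>_j forces \<phi> \<circ> \<lambda>_ki = \<psi> \<circ> \<lambda>_kj on all of \<lambda>_0(k) for a common upper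
   bound k of i and j, so the two classes coincide. *)

section \<open>Generated Bishop topologies\<close>

lemma bishop_topology_extensional: "bishop_topology A (extensional A)"
  unfolding bishop_topology_def by auto

lemma bishop_gen_subset: "F0 \<subseteq> bishop_gen A F0"
  unfolding bishop_gen_def by auto

lemma bishop_gen_least: "bishop_topology A F \<Longrightarrow> F0 \<subseteq> F \<Longrightarrow> bishop_gen A F0 \<subseteq> F"
  unfolding bishop_gen_def by auto

lemma bishop_topology_bishop_gen:
  assumes "F0 \<subseteq> extensional A"
  shows "bishop_topology A (bishop_gen A F0)"
proof -
  let ?S = "{F. bishop_topology A F \<and> F0 \<subseteq> F}"
  have "extensional A \<in> ?S"
    using assms bishop_topology_extensional by auto
  then have sub_ext: "\<Inter>?S \<subseteq> extensional A"
    by (rule Inter_lower)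
  have uniformly_closed: "f \<in> \<Inter>?S"
    if "f \<in> extensional A" and "\<forall>\<epsilon>>0. \<exists>g\<in>\<Inter>?S. \<forall>x\<in>A. \<bar>f x - g x\<bar> \<le> \<epsilon>" for f
  proof
    fix F assume "F \<in> ?S"
    with that(2) have "\<forall>\<epsilon>>0. \<exists>g\<in>F. \<forall>x\<in>A. \<bar>f x - g x\<bar> \<le> \<epsilon>"
      by blast
    with \<open>F \<in> ?S\<close> that(1) show "f \<in> F"
      unfolding bishop_topology_def by blast
  qed
  have const_mem: "restrict (\<lambda>_. c) A \<in> \<Inter>?S" for c
    by (auto simp: bishop_topology_def)
  have add_mem: "restrict (\<lambda>x. f x + g x) A \<in> \<Inter>?S" if "f \<in> \<Inter>?S" "g \<in> \<Inter>?S" for f g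
    using that by (auto simp: bishop_topology_def)
  have comp_mem: "restrict (\<phi> \<circ> f) A \<in> \<Inter>?S" if "f \<in> \<Inter>?S" "\<phi> \<in> Bica" for f \<phi>
    using that by (auto simp: bishop_topology_def)
  show ?thesis
    unfolding bishop_gen_def bishop_topology_def[of A "\<Inter>?S"]
    by (intro conjI ballI allI impI; rule sub_ext const_mem add_mem comp_mem uniformly_closed; assumption)
qed

lemma bishop_topology_pullback:
  assumes maps: "\<forall>x\<in>A. h x \<in> B" and top: "bishop_topology A F"
  shows "bishop_topology B {g \<in> extensional B. restrict (g \<circ> h) A \<in> F}"
  unfolding bishop_topology_def
proof (intro conjI ballI allI impI)
  let ?G = "{g \<in> extensional B. restrict (g \<circ> h) A \<in> F}"
  show "?G \<subseteq> extensional B" by auto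
next
  fix c :: real
  have "restrict (restrict (\<lambda>_. c) B \<circ> h) A = restrict (\<lambda>_. c) A"
    using maps by (auto simp: fun_eq_iff)
  then show "restrict (\<lambda>_. c) B \<in> {g \<in> extensional B. restrict (g \<circ> h) A \<in> F}"
    using top by (auto simp: bishop_topology_def)
next
  fix f g assume "f \<in> {g \<in> extensional B. restrict (g \<circ> h) A \<in> F}"
    and "g \<in> {g \<in> extensional B. restrict (g \<circ> h) A \<in> F}"
  then have "restrict (\<lambda>x. restrict (f \<circ> h) A x + restrict (g \<circ> h) A x) A \<in> F"
    using top unfolding bishop_topology_def by blast
  moreover have "restrict (restrict (\<lambda>x. f x + g x) B \<circ> h) A
      = restrict (\<lambda>x. restrict (f \<circ> h) A x + restrict (g \<circ> h) A x) A"
    using maps by (auto simp: fun_eq_iff)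
  ultimately show "restrict (\<lambda>x. f x + g x) B \<in> {g \<in> extensional B. restrict (g \<circ> h) A \<in> F}"
    by simp
next
  fix f \<phi> assume "f \<in> {g \<in> extensional B. restrict (g \<circ> h) A \<in> F}" and "\<phi> \<in> Bica"
  moreover have "restrict (restrict (\<phi> \<circ> f) B \<circ> h) A = restrict (\<phi> \<circ> restrict (f \<circ> h) A) A"
    using maps by (auto simp: fun_eq_iff)
  ultimately show "restrict (\<phi> \<circ> f) B \<in> {g \<in> extensional B. restrict (g \<circ> h) A \<in> F}"
    using top unfolding bishop_topology_def by auto
next
  fix f assume f: "f \<in> extensional B"
    and approx: "\<forall>\<epsilon>>0. \<exists>g\<in>{g \<in> extensional B. restrict (g \<circ> h) A \<in> F}. \<forall>x\<in>B. \<bar>f x - g x\<bar> \<le> \<epsilon>"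
  have "\<exists>g\<in>F. \<forall>x\<in>A. \<bar>restrict (f \<circ> h) A x - g x\<bar> \<le> \<epsilon>" if "\<epsilon> > 0" for \<epsilon>
  proof -
    obtain g where "g \<in> extensional B" "restrict (g \<circ> h) A \<in> F" "\<forall>x\<in>B. \<bar>f x - g x\<bar> \<le> \<epsilon>"
      using approx \<open>\<epsilon> > 0\<close> by blast
    then show ?thesis
      using maps by (intro bexI[of _ "restrict (g \<circ> h) A"]) auto
  qed
  then show "f \<in> {g \<in> extensional B. restrict (g \<circ> h) A \<in> F}"
    using f top unfolding bishop_topology_def by auto
qed

lemma is_bishop_mor_bishop_gen:
  assumes maps: "\<forall>x\<in>A. h x \<in> B" and "bishop_topology A F" and "G0 \<subseteq> extensional B"
    and "\<forall>g\<in>G0. restrict (g \<circ> h) A \<in> F"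
  shows "is_bishop_mor A F B (bishop_gen B G0) h"
proof -
  have "bishop_gen B G0 \<subseteq> {g \<in> extensional B. restrict (g \<circ> h) A \<in> F}"
    using assms by (intro bishop_gen_least bishop_topology_pullback) auto
  with maps show ?thesis
    unfolding is_bishop_mor_def by blast
qed

lemma Mor_comp:
  assumes h: "is_bishop_mor A F B G h" and \<phi>: "\<phi> \<in> Mor B G C H"
  shows "restrict (\<phi> \<circ> h) A \<in> Mor A F C H"
  unfolding Mor_def is_bishop_mor_def
proof (intro CollectI conjI ballI)
  show "restrict (\<phi> \<circ> h) A \<in> extensional A" by simp
next
  fix x assume "x \<in> A"
  then show "restrict (\<phi> \<circ> h) A x \<in> C"
    using h \<phi> unfolding Mor_def is_bishop_mor_def by auto
next
  fix g assume "g \<in> H"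
  then have "restrict (g \<circ> \<phi>) B \<in> G"
    using \<phi> unfolding Mor_def is_bishop_mor_def by blast
  then have "restrict (restrict (g \<circ> \<phi>) B \<circ> h) A \<in> F"
    using h unfolding is_bishop_mor_def by blast
  moreover have "restrict (restrict (g \<circ> \<phi>) B \<circ> h) A = restrict (g \<circ> restrict (\<phi> \<circ> h) A) A"
    using h unfolding is_bishop_mor_def by (auto simp: fun_eq_iff)
  ultimately show "restrict (g \<circ> restrict (\<phi> \<circ> h) A) A \<in> F"
    by simp
qed

section \<open>Direct limits\<close>

definition direct_family ::
  "'i set \<Rightarrow> ('i \<Rightarrow> 'i \<Rightarrow> bool) \<Rightarrow> ('i \<Rightarrow> 'c set) \<Rightarrow> ('i \<Rightarrow> 'i \<Rightarrow> 'c \<Rightarrow> 'c) \<Rightarrow> bool" where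
  "direct_family I le mu0 mu \<longleftrightarrow>
     (\<forall>i\<in>I. \<forall>j\<in>I. le i j \<longrightarrow> (\<forall>x\<in>mu0 i. mu i j x \<in> mu0 j)) \<and>
     (\<forall>i\<in>I. \<forall>x\<in>mu0 i. mu i i x = x) \<and>
     (\<forall>i\<in>I. \<forall>j\<in>I. \<forall>k\<in>I. le i j \<longrightarrow> le j k \<longrightarrow> (\<forall>x\<in>mu0 i. mu i k x = mu j k (mu i j x)))"

(* The compatibility condition of dl_prod_top, for families with values in any type. *)
definition compatible_family ::
  "'i set \<Rightarrow> ('i \<Rightarrow> 'i \<Rightarrow> bool) \<Rightarrow> ('i \<Rightarrow> 'c set) \<Rightarrow> ('i \<Rightarrow> 'i \<Rightarrow> 'c \<Rightarrow> 'c) \<Rightarrow> ('i \<Rightarrow> 'c \<Rightarrow> 'r)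
     \<Rightarrow> bool" where
  "compatible_family I le mu0 mu \<Theta> \<longleftrightarrow>
     (\<forall>i\<in>I. \<forall>j\<in>I. le i j \<longrightarrow> (\<forall>x\<in>mu0 i. \<Theta> i x = \<Theta> j (mu i j x)))"

lemma dl_rel_sym: "dl_rel I le mu p q \<Longrightarrow> dl_rel I le mu q p"
  unfolding dl_rel_def by metis

lemma dl_rel_trans:
  assumes dir: "directed_set I le" and fam: "direct_family I le mu0 mu"
    and "(i, x) \<in> Sigma I mu0" "(j, y) \<in> Sigma I mu0" "(k, z) \<in> Sigma I mu0"
    and "dl_rel I le mu (i, x) (j, y)" "dl_rel I le mu (j, y) (k, z)"
  shows "dl_rel I le mu (i, x) (k, z)"
proof -
  obtain m1 where m1: "m1 \<in> I" "le i m1" "le j m1" "mu i m1 x = mu j m1 y"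
    using assms(6) unfolding dl_rel_def by auto
  obtain m2 where m2: "m2 \<in> I" "le j m2" "le k m2" "mu j m2 y = mu k m2 z"
    using assms(7) unfolding dl_rel_def by auto
  obtain m where m: "m \<in> I" "le m1 m" "le m2 m"
    using dir m1(1) m2(1) unfolding directed_set_def by blast
  have le_trans: "\<And>a b c. a \<in> I \<Longrightarrow> b \<in> I \<Longrightarrow> c \<in> I \<Longrightarrow> le a b \<Longrightarrow> le b c \<Longrightarrow> le a c"
    using dir unfolding directed_set_def by blast
  have comp: "\<And>a b w. a \<in> I \<Longrightarrow> b \<in> I \<Longrightarrow> le a b \<Longrightarrow> le b m \<Longrightarrow> w \<in> mu0 a
      \<Longrightarrow> mu a m w = mu b m (mu a b w)"
    using fam m(1) unfolding direct_family_def by blast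
  have "mu i m x = mu m1 m (mu i m1 x)"
    using assms(3) m1 m by (intro comp) auto
  also have "\<dots> = mu j m y"
    using assms(4) m1 m comp[of j m1 y] by auto
  also have "\<dots> = mu m2 m (mu j m2 y)"
    using assms(4) m2 m by (intro comp) auto
  also have "\<dots> = mu k m z"
    using assms(5) m2 m comp[of k m2 z] by auto
  finally have "mu i m x = mu k m z" .
  moreover have "le i m" "le k m"
    using assms(3-5) m1 m2 m by (auto intro: le_trans[of _ m1 m] le_trans[of _ m2 m])
  ultimately show ?thesis
    unfolding dl_rel_def using m(1) by auto
qed

lemma mem_eql0_self:
  assumes "directed_set I le" "i \<in> I" "x \<in> mu0 i"
  shows "(i, x) \<in> eql0 I le mu0 mu i x"
proof -
  have "le i i"
    using assms(1,2) unfolding directed_set_def by blast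
  with assms(2,3) show ?thesis
    unfolding eql0_def dl_rel_def by auto
qed

lemma eql0_eqI:
  assumes dir: "directed_set I le" and fam: "direct_family I le mu0 mu"
    and p: "(i, x) \<in> Sigma I mu0" and q: "(j, y) \<in> Sigma I mu0"
    and pq: "dl_rel I le mu (i, x) (j, y)"
  shows "eql0 I le mu0 mu i x = eql0 I le mu0 mu j y"
proof -
  have "dl_rel I le mu (i, x) (k, z) \<longleftrightarrow> dl_rel I le mu (j, y) (k, z)" if r: "(k, z) \<in> Sigma I mu0" for k z
    using dl_rel_trans[OF dir fam p q r pq] dl_rel_trans[OF dir fam q p r dl_rel_sym[OF pq]] by blast
  then show ?thesis
    unfolding eql0_def by auto
qed

lemma compatible_family_eql0:
  assumes "compatible_family I le mu0 mu \<Theta>" and "p \<in> eql0 I le mu0 mu i x"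
    and "i \<in> I" "x \<in> mu0 i"
  shows "\<Theta> (fst p) (snd p) = \<Theta> i x"
proof -
  obtain j y where p: "p = (j, y)"
    by (cases p)
  then have jy: "j \<in> I" "y \<in> mu0 j"
    using assms(2) unfolding eql0_def by auto
  obtain k where k: "k \<in> I" "le i k" "le j k" "mu i k x = mu j k y"
    using assms(2) p unfolding eql0_def dl_rel_def by auto
  have "\<Theta> i x = \<Theta> k (mu i k x)"
    using assms(1,3,4) k unfolding compatible_family_def by blast
  also have "\<dots> = \<Theta> j y"
    using assms(1) jy k unfolding compatible_family_def by simp
  finally show ?thesis
    using p by simp
qed

lemma compatible_family_some_eql0:
  assumes "directed_set I le" "compatible_family I le mu0 mu \<Theta>" "i \<in> I" "x \<in> mu0 i"
  shows "(let p = SOME p. p \<in> eql0 I le mu0 mu i x in \<Theta> (fst p) (snd p)) = \<Theta> i x"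
proof -
  have "(i, x) \<in> eql0 I le mu0 mu i x"
    using assms(1,3,4) by (rule mem_eql0_self)
  then have "(SOME p. p \<in> eql0 I le mu0 mu i x) \<in> eql0 I le mu0 mu i x"
    by (rule someI)
  with assms(2-4) show ?thesis
    unfolding Let_def by (intro compatible_family_eql0)
qed

lemma eql0_in_dir_lim: "i \<in> I \<Longrightarrow> x \<in> mu0 i \<Longrightarrow> eql0 I le mu0 mu i x \<in> dir_lim I le mu0 mu"
  unfolding dir_lim_def by blast

lemma eql0_f_eql0:
  assumes "directed_set I le" "\<Theta> \<in> dl_prod_top I le mu0 mu G" "i \<in> I" "x \<in> mu0 i"
  shows "eql0_f I le mu0 mu \<Theta> (eql0 I le mu0 mu i x) = \<Theta> i x"
proof -
  have "compatible_family I le mu0 mu \<Theta>"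
    using assms(2) unfolding dl_prod_top_def compatible_family_def by blast
  with assms(1,3,4)
  have "(let p = SOME p. p \<in> eql0 I le mu0 mu i x in \<Theta> (fst p) (snd p)) = \<Theta> i x"
    by (intro compatible_family_some_eql0)
  moreover have "eql0 I le mu0 mu i x \<in> dir_lim I le mu0 mu"
    using assms(3,4) by (rule eql0_in_dir_lim)
  ultimately show ?thesis
    unfolding eql0_f_def by simp
qed

section \<open>The spectrum of morphisms into a fixed space\<close>

lemma direct_family_mor_sp:
  assumes sp: "contra_direct_spectrum I le lam0 lam F"
  shows "direct_family I le (mor_sp0 lam0 F X FX) (mor_sp lam0 lam)"
  unfolding direct_family_def
proof (intro conjI ballI impI)
  fix i j \<phi> assume "i \<in> I" "j \<in> I" "le i j" and \<phi>: "\<phi> \<in> mor_sp0 lam0 F X FX i"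
  then have "is_bishop_mor (lam0 j) (F j) (lam0 i) (F i) (lam j i)"
    using sp unfolding contra_direct_spectrum_def by blast
  then show "mor_sp lam0 lam i j \<phi> \<in> mor_sp0 lam0 F X FX j"
    using \<phi> unfolding mor_sp0_def mor_sp_def by (rule Mor_comp)
next
  fix i \<phi> assume "i \<in> I" and \<phi>: "\<phi> \<in> mor_sp0 lam0 F X FX i"
  then have "\<forall>x\<in>lam0 i. lam i i x = x"
    using sp unfolding contra_direct_spectrum_def by blast
  moreover have "\<phi> \<in> extensional (lam0 i)"
    using \<phi> unfolding mor_sp0_def Mor_def by blast
  ultimately show "mor_sp lam0 lam i i \<phi> = \<phi>"
    unfolding mor_sp_def by (auto simp: fun_eq_iff extensional_def)
next
  fix i j k \<phi> assume "i \<in> I" "j \<in> I" "k \<in> I" "le i j" "le j k"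
  then have "\<forall>x\<in>lam0 k. lam k j x \<in> lam0 j" "\<forall>x\<in>lam0 k. lam k i x = lam j i (lam k j x)"
    using sp unfolding contra_direct_spectrum_def by (blast, blast)
  then show "mor_sp lam0 lam i k \<phi> = mor_sp lam0 lam j k (mor_sp lam0 lam i j \<phi>)"
    unfolding mor_sp_def by (auto simp: fun_eq_iff)
qed

lemma inv_lim_in_lam0: "\<Phi> \<in> inv_lim I le lam0 lam \<Longrightarrow> i \<in> I \<Longrightarrow> \<Phi> i \<in> lam0 i"
  unfolding inv_lim_def by auto

lemma inv_lim_transport:
  "\<Phi> \<in> inv_lim I le lam0 lam \<Longrightarrow> i \<in> I \<Longrightarrow> j \<in> I \<Longrightarrow> le i j \<Longrightarrow> \<Phi> i = lam j i (\<Phi> j)"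
  unfolding inv_lim_def by auto

lemma is_bishop_mor_inv_lim_proj:
  assumes "i \<in> I"
  shows "is_bishop_mor (inv_lim I le lam0 lam) (inv_lim_top I le lam0 lam F) (lam0 i) (F i) (\<lambda>\<Phi>. \<Phi> i)"
  unfolding is_bishop_mor_def
proof (intro conjI ballI)
  fix \<Phi> assume "\<Phi> \<in> inv_lim I le lam0 lam"
  then show "\<Phi> i \<in> lam0 i"
    using assms by (rule inv_lim_in_lam0)
next
  fix f assume "f \<in> F i"
  with assms show "restrict (f \<circ> (\<lambda>\<Phi>. \<Phi> i)) (inv_lim I le lam0 lam) \<in> inv_lim_top I le lam0 lam F"
    unfolding inv_lim_top_def by (intro subsetD[OF bishop_gen_subset]) (auto simp: comp_def)
qed

lemma compatible_family_eval:
  assumes "\<Phi> \<in> inv_lim I le lam0 lam"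
  shows "compatible_family I le mu0 (mor_sp lam0 lam) (\<lambda>i \<phi>. \<phi> (\<Phi> i))"
  using assms inv_lim_in_lam0 inv_lim_transport
  unfolding compatible_family_def mor_sp_def by fastforce

(* The class is evaluated at the representative chosen by SOME; by lim_hat_eql0 the choice
   does not matter. *)
definition lim_hat ::
  "'i set \<Rightarrow> ('i \<Rightarrow> 'i \<Rightarrow> bool) \<Rightarrow> ('i \<Rightarrow> 'a set) \<Rightarrow> ('i \<Rightarrow> 'i \<Rightarrow> 'a \<Rightarrow> 'a)
     \<Rightarrow> ('i \<Rightarrow> ('a \<Rightarrow> real) set) \<Rightarrow> 'b set \<Rightarrow> ('b \<Rightarrow> real) set
     \<Rightarrow> ('i \<times> ('a \<Rightarrow> 'b)) set \<Rightarrow> ('i \<Rightarrow> 'a) \<Rightarrow> 'b" where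
  "lim_hat I le lam0 lam F X FX =
     restrict (\<lambda>C. restrict (\<lambda>\<Phi>. let p = SOME p. p \<in> C in snd p (\<Phi> (fst p))) (inv_lim I le lam0 lam))
       (dir_lim I le (mor_sp0 lam0 F X FX) (mor_sp lam0 lam))"

lemma lim_hat_eql0:
  assumes "directed_set I le" "i \<in> I" "\<phi> \<in> mor_sp0 lam0 F X FX i"
  shows "lim_hat I le lam0 lam F X FX (eql0 I le (mor_sp0 lam0 F X FX) (mor_sp lam0 lam) i \<phi>)
    = restrict (\<lambda>\<Phi>. \<phi> (\<Phi> i)) (inv_lim I le lam0 lam)"
proof -
  have "(let p = SOME p. p \<in> eql0 I le (mor_sp0 lam0 F X FX) (mor_sp lam0 lam) i \<phi> in snd p (\<Phi> (fst p)))
      = \<phi> (\<Phi> i)" if "\<Phi> \<in> inv_lim I le lam0 lam" for \<Phi>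
    using assms(1) compatible_family_eval[OF that] assms(2,3) by (rule compatible_family_some_eql0)
  moreover have "eql0 I le (mor_sp0 lam0 F X FX) (mor_sp lam0 lam) i \<phi>
      \<in> dir_lim I le (mor_sp0 lam0 F X FX) (mor_sp lam0 lam)"
    using assms(2,3) by (rule eql0_in_dir_lim)
  ultimately show ?thesis
    unfolding lim_hat_def by (auto intro: restrict_ext)
qed

lemma lim_hat_in_Mor:
  assumes "directed_set I le" "C \<in> dir_lim I le (mor_sp0 lam0 F X FX) (mor_sp lam0 lam)"
  shows "lim_hat I le lam0 lam F X FX C \<in> Mor (inv_lim I le lam0 lam) (inv_lim_top I le lam0 lam F) X FX"
proof -
  obtain i \<phi> where i: "i \<in> I" and \<phi>: "\<phi> \<in> mor_sp0 lam0 F X FX i"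
    and C: "C = eql0 I le (mor_sp0 lam0 F X FX) (mor_sp lam0 lam) i \<phi>"
    using assms(2) unfolding dir_lim_def by blast
  have "restrict (\<phi> \<circ> (\<lambda>\<Phi>. \<Phi> i)) (inv_lim I le lam0 lam)
      \<in> Mor (inv_lim I le lam0 lam) (inv_lim_top I le lam0 lam F) X FX"
    using is_bishop_mor_inv_lim_proj[OF i] \<phi> unfolding mor_sp0_def by (rule Mor_comp)
  then show ?thesis
    unfolding C lim_hat_eql0[OF assms(1) i \<phi>] by (simp add: comp_def)
qed

lemma eval_family_in_dl_prod_top:
  assumes sp: "contra_direct_spectrum I le lam0 lam F"
    and \<Phi>: "\<Phi> \<in> inv_lim I le lam0 lam" and f: "f \<in> FX"
  shows "(\<lambda>i\<in>I. \<lambda>\<phi>\<in>mor_sp0 lam0 F X FX i. f (\<phi> (\<Phi> i)))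
    \<in> dl_prod_top I le (mor_sp0 lam0 F X FX) (mor_sp lam0 lam) (mor_sp_top lam0 F X FX)"
  unfolding dl_prod_top_def
proof (intro CollectI conjI ballI impI)
  show "(\<lambda>i\<in>I. \<lambda>\<phi>\<in>mor_sp0 lam0 F X FX i. f (\<phi> (\<Phi> i))) \<in> Pi\<^sub>E I (mor_sp_top lam0 F X FX)"
    using inv_lim_in_lam0[OF \<Phi>] f
    unfolding mor_sp_top_def exp_top_def mor_sp0_def
    by (auto intro!: subsetD[OF bishop_gen_subset])
next
  fix i j \<phi> assume ij: "i \<in> I" "j \<in> I" "le i j" and \<phi>: "\<phi> \<in> mor_sp0 lam0 F X FX i"
  have "mor_sp lam0 lam i j \<phi> \<in> mor_sp0 lam0 F X FX j"
    using direct_family_mor_sp[OF sp] ij \<phi> unfolding direct_family_def by blast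
  moreover have "\<phi> (\<Phi> i) = mor_sp lam0 lam i j \<phi> (\<Phi> j)"
    using compatible_family_eval[OF \<Phi>] ij \<phi> unfolding compatible_family_def by blast
  ultimately show "(\<lambda>i\<in>I. \<lambda>\<phi>\<in>mor_sp0 lam0 F X FX i. f (\<phi> (\<Phi> i))) i \<phi>
      = (\<lambda>i\<in>I. \<lambda>\<phi>\<in>mor_sp0 lam0 F X FX i. f (\<phi> (\<Phi> i))) j (mor_sp lam0 lam i j \<phi>)"
    using ij \<phi> by simp
qed

lemma exp_generator_comp_lim_hat:
  assumes dir: "directed_set I le" and sp: "contra_direct_spectrum I le lam0 lam F"
    and \<Phi>: "\<Phi> \<in> inv_lim I le lam0 lam" and f: "f \<in> FX"
  shows "restrict (restrict (\<lambda>h. f (h \<Phi>)) (Mor (inv_lim I le lam0 lam) (inv_lim_top I le lam0 lam F) X FX)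
      \<circ> lim_hat I le lam0 lam F X FX) (dir_lim I le (mor_sp0 lam0 F X FX) (mor_sp lam0 lam))
    = eql0_f I le (mor_sp0 lam0 F X FX) (mor_sp lam0 lam) (\<lambda>i\<in>I. \<lambda>\<phi>\<in>mor_sp0 lam0 F X FX i. f (\<phi> (\<Phi> i)))"
proof (rule ext)
  fix C
  show "restrict (restrict (\<lambda>h. f (h \<Phi>)) (Mor (inv_lim I le lam0 lam) (inv_lim_top I le lam0 lam F) X FX)
      \<circ> lim_hat I le lam0 lam F X FX) (dir_lim I le (mor_sp0 lam0 F X FX) (mor_sp lam0 lam)) C
    = eql0_f I le (mor_sp0 lam0 F X FX) (mor_sp lam0 lam) (\<lambda>i\<in>I. \<lambda>\<phi>\<in>mor_sp0 lam0 F X FX i. f (\<phi> (\<Phi> i))) C"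
  proof (cases "C \<in> dir_lim I le (mor_sp0 lam0 F X FX) (mor_sp lam0 lam)")
    case True
    then obtain i \<phi> where i: "i \<in> I" and \<phi>: "\<phi> \<in> mor_sp0 lam0 F X FX i"
      and C: "C = eql0 I le (mor_sp0 lam0 F X FX) (mor_sp lam0 lam) i \<phi>"
      unfolding dir_lim_def by blast
    have "lim_hat I le lam0 lam F X FX C = restrict (\<lambda>\<Phi>. \<phi> (\<Phi> i)) (inv_lim I le lam0 lam)"
      unfolding C using dir i \<phi> by (rule lim_hat_eql0)
    moreover have "eql0_f I le (mor_sp0 lam0 F X FX) (mor_sp lam0 lam)
        (\<lambda>i\<in>I. \<lambda>\<phi>\<in>mor_sp0 lam0 F X FX i. f (\<phi> (\<Phi> i))) C = f (\<phi> (\<Phi> i))"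
      unfolding C using dir eval_family_in_dl_prod_top[OF sp \<Phi> f] i \<phi>
      by (subst eql0_f_eql0) auto
    ultimately show ?thesis
      using lim_hat_in_Mor[OF dir True] \<Phi> True by simp
  next
    case False
    then show ?thesis
      unfolding eql0_f_def by simp
  qed
qed

theorem lim_hat_Mor:
  assumes dir: "directed_set I le" and sp: "contra_direct_spectrum I le lam0 lam F"
  shows "lim_hat I le lam0 lam F X FX
    \<in> Mor (dir_lim I le (mor_sp0 lam0 F X FX) (mor_sp lam0 lam))
          (dir_lim_top I le (mor_sp0 lam0 F X FX) (mor_sp lam0 lam) (mor_sp_top lam0 F X FX))
          (Mor (inv_lim I le lam0 lam) (inv_lim_top I le lam0 lam F) X FX)
          (exp_top (inv_lim I le lam0 lam) (inv_lim_top I le lam0 lam F) X FX)"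
proof -
  have "bishop_topology (dir_lim I le (mor_sp0 lam0 F X FX) (mor_sp lam0 lam))
      (dir_lim_top I le (mor_sp0 lam0 F X FX) (mor_sp lam0 lam) (mor_sp_top lam0 F X FX))"
    unfolding dir_lim_top_def by (rule bishop_topology_bishop_gen) (auto simp: eql0_f_def)
  moreover have "eql0_f I le (mor_sp0 lam0 F X FX) (mor_sp lam0 lam) (\<lambda>i\<in>I. \<lambda>\<phi>\<in>mor_sp0 lam0 F X FX i. f (\<phi> (\<Phi> i)))
      \<in> dir_lim_top I le (mor_sp0 lam0 F X FX) (mor_sp lam0 lam) (mor_sp_top lam0 F X FX)"
    if "\<Phi> \<in> inv_lim I le lam0 lam" "f \<in> FX" for \<Phi> f
    unfolding dir_lim_top_def
    using eval_family_in_dl_prod_top[OF sp that] by (blast intro: subsetD[OF bishop_gen_subset])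
  ultimately have "is_bishop_mor (dir_lim I le (mor_sp0 lam0 F X FX) (mor_sp lam0 lam))
      (dir_lim_top I le (mor_sp0 lam0 F X FX) (mor_sp lam0 lam) (mor_sp_top lam0 F X FX))
      (Mor (inv_lim I le lam0 lam) (inv_lim_top I le lam0 lam F) X FX)
      (exp_top (inv_lim I le lam0 lam) (inv_lim_top I le lam0 lam F) X FX)
      (lim_hat I le lam0 lam F X FX)"
    unfolding exp_top_def using lim_hat_in_Mor[OF dir]
    by (intro is_bishop_mor_bishop_gen) (auto simp: exp_generator_comp_lim_hat[OF dir sp])
  then show ?thesis
    unfolding Mor_def lim_hat_def by simp
qed

theorem inj_on_lim_hat:
  assumes dir: "directed_set I le" and sp: "contra_direct_spectrum I le lam0 lam F"
    and proj_surj: "\<forall>j\<in>I. \<forall>y\<in>lam0 j. \<exists>\<Theta>\<in>inv_lim I le lam0 lam. \<Theta> j = y"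
  shows "inj_on (lim_hat I le lam0 lam F X FX) (dir_lim I le (mor_sp0 lam0 F X FX) (mor_sp lam0 lam))"
proof (rule inj_onI)
  fix C1 C2
  assume "C1 \<in> dir_lim I le (mor_sp0 lam0 F X FX) (mor_sp lam0 lam)"
    and "C2 \<in> dir_lim I le (mor_sp0 lam0 F X FX) (mor_sp lam0 lam)"
    and hat_eq: "lim_hat I le lam0 lam F X FX C1 = lim_hat I le lam0 lam F X FX C2"
  then obtain i \<phi> j \<psi> where i: "i \<in> I" "\<phi> \<in> mor_sp0 lam0 F X FX i"
    and j: "j \<in> I" "\<psi> \<in> mor_sp0 lam0 F X FX j"
    and C1: "C1 = eql0 I le (mor_sp0 lam0 F X FX) (mor_sp lam0 lam) i \<phi>"
    and C2: "C2 = eql0 I le (mor_sp0 lam0 F X FX) (mor_sp lam0 lam) j \<psi>"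
    unfolding dir_lim_def by blast
  have eval_eq: "\<phi> (\<Phi> i) = \<psi> (\<Phi> j)" if "\<Phi> \<in> inv_lim I le lam0 lam" for \<Phi>
    using fun_cong[OF hat_eq, of \<Phi>] that
    unfolding C1 C2 lim_hat_eql0[OF dir i] lim_hat_eql0[OF dir j] by simp
  obtain k where k: "k \<in> I" "le i k" "le j k"
    using dir i(1) j(1) unfolding directed_set_def by blast
  have "mor_sp lam0 lam i k \<phi> = mor_sp lam0 lam j k \<psi>"
  proof (rule ext)
    fix y
    show "mor_sp lam0 lam i k \<phi> y = mor_sp lam0 lam j k \<psi> y"
    proof (cases "y \<in> lam0 k")
      case True
      then obtain \<Theta> where \<Theta>: "\<Theta> \<in> inv_lim I le lam0 lam" "\<Theta> k = y"
        using proj_surj k(1) by blast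
      then have "\<phi> (lam k i y) = \<psi> (lam k j y)"
        using eval_eq inv_lim_transport i(1) j(1) k by metis
      with True show ?thesis
        unfolding mor_sp_def by simp
    next
      case False
      then show ?thesis
        unfolding mor_sp_def by simp
    qed
  qed
  then have "dl_rel I le (mor_sp lam0 lam) (i, \<phi>) (j, \<psi>)"
    unfolding dl_rel_def using k by auto
  moreover have "(i, \<phi>) \<in> Sigma I (mor_sp0 lam0 F X FX)" "(j, \<psi>) \<in> Sigma I (mor_sp0 lam0 F X FX)"
    using i j by auto
  ultimately show "C1 = C2"
    unfolding C1 C2 using eql0_eqI[OF dir direct_family_mor_sp[OF sp]] by blast
qed

theorem proposition11p4:
  fixes I :: "'i set" and le :: "'i \<Rightarrow> 'i \<Rightarrow> bool"
    and lam0 :: "'i \<Rightarrow> 'a set" and lam :: "'i \<Rightarrow> 'i \<Rightarrow> 'a \<Rightarrow> 'a"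
    and F :: "'i \<Rightarrow> ('a \<Rightarrow> real) set"
    and X :: "'b set" and FX :: "('b \<Rightarrow> real) set"
  assumes "directed_set I le"
    and "contra_direct_spectrum I le lam0 lam F"
    and "bishop_topology X FX"
  shows "\<exists>hat.
     hat \<in> Mor (dir_lim I le (mor_sp0 lam0 F X FX) (mor_sp lam0 lam))
               (dir_lim_top I le (mor_sp0 lam0 F X FX) (mor_sp lam0 lam) (mor_sp_top lam0 F X FX))
               (Mor (inv_lim I le lam0 lam) (inv_lim_top I le lam0 lam F) X FX)
               (exp_top (inv_lim I le lam0 lam) (inv_lim_top I le lam0 lam F) X FX)
     \<and> ((\<forall>j\<in>I. \<forall>y\<in>lam0 j. \<exists>\<Theta>\<in>inv_lim I le lam0 lam. \<Theta> j = y)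
          \<longrightarrow> inj_on hat (dir_lim I le (mor_sp0 lam0 F X FX) (mor_sp lam0 lam)))"
  using lim_hat_Mor[OF assms(1,2)] inj_on_lim_hat[OF assms(1,2)] by blast

end
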